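(* Let $G=(V,\pi)$ be a two-player game with two questions per player ($\{A,A'\}$ for Alice, $\{B,B'\}$ for Bob) and finite answer sets. If $\pi(X,Y)=0$ for some question pair $(X,Y)$, then $\omega^*(G)=\omega(G)$.
   Context: $\omega(G)$ is the classical value: the supremum of $\sum_{x,y}\pi(x,y)V(\alpha(x),\beta(y)|x,y)$ over functions $\alpha,\beta$ from questions to answers. $\omega^*(G)$ is the entangled value: the supremum, over finite-dimensional states $|\psi\rangle\in\mathbb{C}^{d_A}\otimes\mathbb{C}^{d_B}$ and POVMs $\{A^x_a\}_a,\{B^y_b\}_b$, of $\sum_{x,y}\pi(x,y)\sum_{a,b}V(a,b|x,y)\langle\psi|A^x_a\otimes B^y_b|\psi\rangle$. *)

theory Defs
  imports Complex_Main
begin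

text \<open>Two-player games with question sets bool (Alice: False = A, True = A';
 Bob: False = B, True = B'), finite answer types 'a (Alice) and 'b (Bob),
 question distribution pi and predicate V a b x y = V(a,b|x,y).
 Finite-dimensional matrices of size d are functions nat => nat => complex
 with indices < d; a state in C^dA (x) C^dB is a coefficient array psi i j.\<close>

definition prob_dist :: "(bool \<Rightarrow> bool \<Rightarrow> real) \<Rightarrow> bool" where
  "prob_dist \<pi> \<longleftrightarrow> (\<forall>x y. \<pi> x y \<ge> 0) \<and> (\<Sum>x\<in>UNIV. \<Sum>y\<in>UNIV. \<pi> x y) = 1"

definition game_payoff :: "(bool \<Rightarrow> bool \<Rightarrow> real) \<Rightarrow> ('a \<Rightarrow> 'b \<Rightarrow> bool \<Rightarrow> bool \<Rightarrow> bool)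
    \<Rightarrow> (bool \<Rightarrow> bool \<Rightarrow> 'a \<Rightarrow> 'b \<Rightarrow> real) \<Rightarrow> real" where
  "game_payoff \<pi> V p = (\<Sum>x\<in>UNIV. \<Sum>y\<in>UNIV. \<pi> x y *
      (\<Sum>a\<in>UNIV. \<Sum>b\<in>UNIV. (if V a b x y then 1 else 0) * p x y a b))"

definition classical_value :: "(bool \<Rightarrow> bool \<Rightarrow> real) \<Rightarrow> ('a::finite \<Rightarrow> 'b::finite \<Rightarrow> bool \<Rightarrow> bool \<Rightarrow> bool) \<Rightarrow> real" where
  "classical_value \<pi> V = Sup {(\<Sum>x\<in>UNIV. \<Sum>y\<in>UNIV. \<pi> x y * (if V (\<alpha> x) (\<beta> y) x y then 1 else 0))
      | (\<alpha> :: bool \<Rightarrow> 'a) (\<beta> :: bool \<Rightarrow> 'b). True}"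

definition hermitian :: "nat \<Rightarrow> (nat \<Rightarrow> nat \<Rightarrow> complex) \<Rightarrow> bool" where
  "hermitian d M \<longleftrightarrow> (\<forall>i<d. \<forall>j<d. M i j = cnj (M j i))"

definition psd :: "nat \<Rightarrow> (nat \<Rightarrow> nat \<Rightarrow> complex) \<Rightarrow> bool" where
  "psd d M \<longleftrightarrow> hermitian d M \<and>
     (\<forall>v :: nat \<Rightarrow> complex. Re (\<Sum>i<d. \<Sum>j<d. cnj (v i) * M i j * v j) \<ge> 0)"

definition povm :: "nat \<Rightarrow> ('a::finite \<Rightarrow> nat \<Rightarrow> nat \<Rightarrow> complex) \<Rightarrow> bool" where
  "povm d P \<longleftrightarrow> (\<forall>a. psd d (P a)) \<and>
     (\<forall>i<d. \<forall>j<d. (\<Sum>a\<in>UNIV. P a i j) = (if i = j then 1 else 0))"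

definition unit_state :: "nat \<Rightarrow> nat \<Rightarrow> (nat \<Rightarrow> nat \<Rightarrow> complex) \<Rightarrow> bool" where
  "unit_state dA dB \<psi> \<longleftrightarrow> (\<Sum>i<dA. \<Sum>j<dB. (cmod (\<psi> i j))\<^sup>2) = 1"

text \<open>The amplitude <psi| M (x) N |psi>.\<close>
definition tensor_expect :: "nat \<Rightarrow> nat \<Rightarrow> (nat \<Rightarrow> nat \<Rightarrow> complex) \<Rightarrow> (nat \<Rightarrow> nat \<Rightarrow> complex)
    \<Rightarrow> (nat \<Rightarrow> nat \<Rightarrow> complex) \<Rightarrow> complex" where
  "tensor_expect dA dB \<psi> M N = (\<Sum>i<dA. \<Sum>j<dB. \<Sum>i'<dA. \<Sum>j'<dB.
      cnj (\<psi> i j) * M i i' * N j j' * \<psi> i' j')"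

definition entangled_value :: "(bool \<Rightarrow> bool \<Rightarrow> real) \<Rightarrow> ('a::finite \<Rightarrow> 'b::finite \<Rightarrow> bool \<Rightarrow> bool \<Rightarrow> bool) \<Rightarrow> real" where
  "entangled_value \<pi> V = Sup {game_payoff \<pi> V (\<lambda>x y a b. Re (tensor_expect dA dB \<psi> (Am x a) (Bm y b)))
      | dA dB \<psi> (Am :: bool \<Rightarrow> 'a \<Rightarrow> nat \<Rightarrow> nat \<Rightarrow> complex) (Bm :: bool \<Rightarrow> 'b \<Rightarrow> nat \<Rightarrow> nat \<Rightarrow> complex).
         unit_state dA dB \<psi> \<and> (\<forall>x. povm dA (Am x)) \<and> (\<forall>y. povm dB (Bm y))}"

end

(*
  A quantum strategy yields a nonsignalling correlation p(a,b|x,y): its entries are nonnegative by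
  the Schur product theorem (<psi| A (x) B |psi> pairs the positive matrix Psi* A Psi with B), and
  each player's marginal ignores the other player's question because POVMs sum to the identity.
  As the question pair (X,Y) carries no weight, only the correlations at (~X,~Y), (X,~Y) and (~X,Y)
  matter, and they agree pairwise on their common marginals.  Gluing them along these marginals
  gives a joint distribution on answer quadruples (a,b,a',b'), i.e. a local hidden variable model,
  so the entangled payoff is an average of payoffs of deterministic strategies and hence at most
  the classical value.  Conversely, deterministic strategies are quantum strategies in dimension one.
*)

theory Submission
  imports Defs
begin

definition quad_form :: "nat set \<Rightarrow> (nat \<Rightarrow> nat \<Rightarrow> complex) \<Rightarrow> (nat \<Rightarrow> complex) \<Rightarrow> complex" where
  "quad_form S M v = (\<Sum>i\<in>S. \<Sum>j\<in>S. cnj (v i) * M i j * v j)"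

definition hermitian_on :: "nat set \<Rightarrow> (nat \<Rightarrow> nat \<Rightarrow> complex) \<Rightarrow> bool" where
  "hermitian_on S M \<longleftrightarrow> (\<forall>i\<in>S. \<forall>j\<in>S. M i j = cnj (M j i))"

definition nonneg_form_on :: "nat set \<Rightarrow> (nat \<Rightarrow> nat \<Rightarrow> complex) \<Rightarrow> bool" where
  "nonneg_form_on S M \<longleftrightarrow> (\<forall>v. 0 \<le> Re (quad_form S M v))"

lemma psd_iff_on_lessThan: "psd d M \<longleftrightarrow> hermitian_on {..<d} M \<and> nonneg_form_on {..<d} M"
  unfolding psd_def hermitian_def hermitian_on_def nonneg_form_on_def quad_form_def by auto

lemma hermitian_on_subset: "hermitian_on S M \<Longrightarrow> T \<subseteq> S \<Longrightarrow> hermitian_on T M"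
  unfolding hermitian_on_def by blast

lemma hermitian_on_diag_real:
  assumes "hermitian_on S M" "k \<in> S"
  shows "M k k = of_real (Re (M k k))"
proof -
  have "M k k = cnj (M k k)" using assms unfolding hermitian_on_def by blast
  then show ?thesis by (simp add: complex_eq_iff)
qed

lemma quad_form_insert:
  assumes "finite F" "k \<notin> F"
  shows "quad_form (insert k F) M v = cnj (v k) * M k k * v k + (\<Sum>j\<in>F. cnj (v k) * M k j * v j)
     + (\<Sum>i\<in>F. cnj (v i) * M i k * v k) + quad_form F M v"
  using assms by (simp add: quad_form_def sum.distrib algebra_simps)

lemma quad_form_supported:
  assumes "finite S" "T \<subseteq> S" "\<And>i. i \<in> S - T \<Longrightarrow> v i = 0"
  shows "quad_form S M v = quad_form T M v"
proof -
  have "quad_form S M v = (\<Sum>i\<in>S. \<Sum>j\<in>T. cnj (v i) * M i j * v j)"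
    unfolding quad_form_def using assms
    by (intro sum.cong[OF refl] sum.mono_neutral_right) (auto dest: finite_subset)
  also have "\<dots> = quad_form T M v"
    unfolding quad_form_def using assms by (intro sum.mono_neutral_right) (auto dest: finite_subset)
  finally show ?thesis .
qed

lemma nonneg_form_on_subset:
  assumes "nonneg_form_on S M" "finite S" "T \<subseteq> S"
  shows "nonneg_form_on T M"
  unfolding nonneg_form_on_def
proof
  fix v :: "nat \<Rightarrow> complex"
  let ?w = "\<lambda>i. if i \<in> T then v i else 0"
  have "quad_form T M v = quad_form T M ?w"
    unfolding quad_form_def by (intro sum.cong refl) auto
  also have "\<dots> = quad_form S M ?w"
    using assms by (intro quad_form_supported[symmetric]) auto
  finally show "0 \<le> Re (quad_form T M v)"
    using assms(1) unfolding nonneg_form_on_def by simp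
qed

lemma nonneg_form_on_diag:
  assumes "nonneg_form_on S M" "finite S" "k \<in> S"
  shows "0 \<le> Re (M k k)"
proof -
  let ?e = "\<lambda>i. if i = k then 1 else 0"
  have "quad_form S M ?e = quad_form {k} M ?e"
    using assms by (intro quad_form_supported) auto
  then have "quad_form S M ?e = M k k" by (simp add: quad_form_def)
  then show ?thesis using assms(1) unfolding nonneg_form_on_def by metis
qed

lemma nonneg_form_on_zero_diag:
  assumes "hermitian_on S N" "nonneg_form_on S N" "finite S" "k \<in> S" "j \<in> S" "N k k = 0"
  shows "N k j = 0"
proof (rule ccontr)
  assume ne: "N k j \<noteq> 0"
  then have jk: "j \<noteq> k" using assms(6) by auto
  define s where "s = (Re (N j j) + 1) / (2 * (cmod (N k j))\<^sup>2)"
  define t where "t = - (of_real s * N k j)"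
  let ?v = "\<lambda>i. if i = k then t else if i = j then 1 else 0"
  have "quad_form S N ?v = quad_form {k, j} N ?v"
    using assms by (intro quad_form_supported) auto
  also have "\<dots> = cnj t * N k j + N j k * t + N j j"
    using jk assms(6) by (simp add: quad_form_def)
  also have "N j k = cnj (N k j)" using assms(1,4,5) unfolding hermitian_on_def by blast
  finally have "Re (quad_form S N ?v) = 2 * Re (cnj t * N k j) + Re (N j j)" by simp
  also have "Re (cnj t * N k j) = - s * (cmod (N k j))\<^sup>2"
    unfolding t_def cmod_power2 by (simp add: algebra_simps power2_eq_square)
  also have "- s * (cmod (N k j))\<^sup>2 = - (Re (N j j) + 1) / 2"
    using ne by (simp add: s_def field_simps)
  finally have "Re (quad_form S N ?v) = -1" by (simp add: field_simps)
  then show False using assms(2) unfolding nonneg_form_on_def by (metis neg_0_le_iff_le not_one_le_zero)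
qed

definition schur_compl :: "(nat \<Rightarrow> nat \<Rightarrow> complex) \<Rightarrow> nat \<Rightarrow> nat \<Rightarrow> nat \<Rightarrow> complex" where
  "schur_compl N k i j = N i j - N i k * N k j / N k k"

lemma hermitian_on_schur_compl:
  assumes "hermitian_on S N" "k \<in> S"
  shows "hermitian_on S (schur_compl N k)"
  unfolding hermitian_on_def
proof (intro ballI)
  fix i j assume "i \<in> S" "j \<in> S"
  then have "N i j = cnj (N j i)" "N i k = cnj (N k i)" "N k j = cnj (N j k)" "N k k = cnj (N k k)"
    using assms unfolding hermitian_on_def by blast+
  then show "schur_compl N k i j = cnj (schur_compl N k j i)"
    unfolding schur_compl_def by (simp add: mult.commute)
qed

lemma nonneg_form_on_schur_compl:
  assumes "finite F" "k \<notin> F" "hermitian_on (insert k F) N" "nonneg_form_on (insert k F) N"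
    and "0 < Re (N k k)"
  shows "nonneg_form_on F (schur_compl N k)"
  unfolding nonneg_form_on_def
proof
  fix v :: "nat \<Rightarrow> complex"
  define c where "c = Re (N k k)"
  have Nkk: "N k k = of_real c"
    unfolding c_def using assms(3) by (rule hermitian_on_diag_real) simp
  have herm: "cnj (N k i) = N i k" if "i \<in> F" for i
    using assms(3) that unfolding hermitian_on_def by (metis complex_cnj_cnj insertCI)
  define a where "a = (\<Sum>j\<in>F. N k j * v j)"
  \<comment> \<open>the \<open>k\<close>-th coordinate of \<open>w\<close> completes the square\<close>
  define w where "w = v(k := - a / N k k)"
  have wF: "w j = v j" if "j \<in> F" for j using assms(2) that unfolding w_def by auto
  have cnj_a: "cnj a = (\<Sum>i\<in>F. cnj (v i) * N i k)"
    unfolding a_def by (simp add: herm mult.commute cong: sum.cong)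
  have entry: "cnj (v i) * schur_compl N k i j * v j
      = cnj (v i) * N i j * v j - cnj (v i) * N i k * (N k j * v j) / N k k" for i j
    by (simp add: schur_compl_def algebra_simps)
  have "quad_form F (schur_compl N k) v
      = quad_form F N v - (\<Sum>i\<in>F. \<Sum>j\<in>F. cnj (v i) * N i k * (N k j * v j)) / N k k"
    unfolding quad_form_def entry sum_subtractf sum_divide_distrib ..
  also have "(\<Sum>i\<in>F. \<Sum>j\<in>F. cnj (v i) * N i k * (N k j * v j)) = (\<Sum>i\<in>F. cnj (v i) * N i k) * a"
    unfolding a_def by (rule sum_product[symmetric])
  also have "\<dots> = cnj a * a" by (simp only: cnj_a)
  also have "quad_form F N v - cnj a * a / N k k = quad_form (insert k F) N w"
  proof -
    have "(\<Sum>j\<in>F. cnj (w k) * N k j * w j) = cnj (w k) * a"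
      unfolding a_def sum_distrib_left by (intro sum.cong refl) (simp add: wF mult.assoc)
    moreover have "(\<Sum>i\<in>F. cnj (w i) * N i k * w k) = cnj a * w k"
      unfolding cnj_a sum_distrib_right by (intro sum.cong refl) (simp add: wF)
    moreover have "quad_form F N w = quad_form F N v"
      unfolding quad_form_def by (intro sum.cong refl) (simp add: wF)
    moreover have "cnj (w k) * N k k * w k + cnj (w k) * a + cnj a * w k = - cnj a * a / N k k"
      using assms(5) unfolding w_def Nkk c_def[symmetric] by (simp add: field_simps)
    ultimately show ?thesis
      unfolding quad_form_insert[OF assms(1,2)] by simp
  qed
  finally show "0 \<le> Re (quad_form F (schur_compl N k) v)"
    using assms(4) unfolding nonneg_form_on_def by simp
qed

lemma sum_entrywise_schur_compl:
  assumes "finite F" "k \<notin> F" "hermitian_on (insert k F) N" "N k k \<noteq> 0"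
  shows "(\<Sum>i\<in>insert k F. \<Sum>j\<in>insert k F. G i j * N i j)
    = quad_form (insert k F) G (N k) / N k k + (\<Sum>i\<in>F. \<Sum>j\<in>F. G i j * schur_compl N k i j)"
proof -
  have herm: "cnj (N k i) = N i k" if "i \<in> insert k F" for i
    using assms(3) that unfolding hermitian_on_def by (metis complex_cnj_cnj insertCI)
  have "(\<Sum>i\<in>insert k F. \<Sum>j\<in>insert k F. G i j * N i j)
      = (\<Sum>i\<in>insert k F. \<Sum>j\<in>insert k F. G i j * (N i k * N k j / N k k))
        + (\<Sum>i\<in>insert k F. \<Sum>j\<in>insert k F. G i j * schur_compl N k i j)"
    unfolding sum.distrib[symmetric] by (intro sum.cong refl) (simp add: schur_compl_def algebra_simps)
  also have "(\<Sum>i\<in>insert k F. \<Sum>j\<in>insert k F. G i j * (N i k * N k j / N k k))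
      = quad_form (insert k F) G (N k) / N k k"
    unfolding quad_form_def sum_divide_distrib by (intro sum.cong refl) (simp add: herm)
  also have "(\<Sum>i\<in>insert k F. \<Sum>j\<in>insert k F. G i j * schur_compl N k i j)
      = (\<Sum>i\<in>F. \<Sum>j\<in>F. G i j * schur_compl N k i j)"
  proof -
    have "schur_compl N k i k = 0" "schur_compl N k k i = 0" for i
      using assms(4) by (simp_all add: schur_compl_def)
    then show ?thesis using assms(1,2) by simp
  qed
  finally show ?thesis .
qed

text \<open>Schur product theorem, evaluated at the all-ones vector.  The induction eliminates one
  index at a time: if \<open>N k k > 0\<close>, \<open>N\<close> is a positive rank-one matrix plus its Schur complement;
  if \<open>N k k = 0\<close>, row and column \<open>k\<close> of \<open>N\<close> vanish.\<close>

theorem sum_hadamard_nonneg: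
  assumes "finite S" "hermitian_on S N" "nonneg_form_on S N" "nonneg_form_on S G"
  shows "0 \<le> Re (\<Sum>i\<in>S. \<Sum>j\<in>S. G i j * N i j)"
  using assms
proof (induction S arbitrary: N rule: finite_induct)
  case empty
  then show ?case by simp
next
  case (insert k F)
  have G_F: "nonneg_form_on F G"
    using nonneg_form_on_subset[OF insert.prems(3)] insert.hyps(1) by blast
  have diag: "0 \<le> Re (N k k)"
    using nonneg_form_on_diag[OF insert.prems(2)] insert.hyps(1) by blast
  show ?case
  proof (cases "Re (N k k) = 0")
    case True
    then have "N k k = 0"
      using hermitian_on_diag_real[OF insert.prems(1)] by (metis insertI1 of_real_0)
    then have row: "N k j = 0" if "j \<in> insert k F" for j
      using nonneg_form_on_zero_diag[OF insert.prems(1,2)] insert.hyps(1) that by blast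
    have col: "N j k = 0" if "j \<in> insert k F" for j
    proof -
      have "N j k = cnj (N k j)" using insert.prems(1) that unfolding hermitian_on_def by blast
      then show ?thesis using row[OF that] by simp
    qed
    have "(\<Sum>i\<in>insert k F. \<Sum>j\<in>insert k F. G i j * N i j) = (\<Sum>i\<in>F. \<Sum>j\<in>F. G i j * N i j)"
      using insert.hyps by (simp add: row col)
    moreover have "0 \<le> Re (\<Sum>i\<in>F. \<Sum>j\<in>F. G i j * N i j)"
      using insert.IH G_F hermitian_on_subset[OF insert.prems(1)]
        nonneg_form_on_subset[OF insert.prems(2)] insert.hyps(1) by blast
    ultimately show ?thesis by simp
  next
    case False
    with diag have pos: "0 < Re (N k k)" by simp
    have "N k k = of_real (Re (N k k))"
      using insert.prems(1) by (rule hermitian_on_diag_real) simp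
    then have "0 \<le> Re (quad_form (insert k F) G (N k) / N k k)"
      using insert.prems(3) pos unfolding nonneg_form_on_def by (metis Re_divide_of_real divide_nonneg_pos)
    moreover have "0 \<le> Re (\<Sum>i\<in>F. \<Sum>j\<in>F. G i j * schur_compl N k i j)"
      using insert.IH G_F nonneg_form_on_schur_compl[OF insert.hyps insert.prems(1,2) pos]
        hermitian_on_subset[OF hermitian_on_schur_compl[OF insert.prems(1)]] by blast
    moreover have "N k k \<noteq> 0" using pos by auto
    ultimately show ?thesis
      using sum_entrywise_schur_compl[OF insert.hyps insert.prems(1)] by simp
  qed
qed

lemma sum_swap_middle:
  "(\<Sum>a\<in>A. \<Sum>b\<in>B. \<Sum>c\<in>C. \<Sum>d\<in>D. f a b c d) = (\<Sum>a\<in>A. \<Sum>c\<in>C. \<Sum>b\<in>B. \<Sum>d\<in>D. f a b c d)"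
  by (rule sum.cong[OF refl], rule sum.swap)

lemma sum_swap_pairs:
  "(\<Sum>a\<in>A. \<Sum>b\<in>B. \<Sum>c\<in>C. \<Sum>d\<in>D. f a b c d) = (\<Sum>c\<in>C. \<Sum>d\<in>D. \<Sum>a\<in>A. \<Sum>b\<in>B. f a b c d)"
proof -
  have "(\<Sum>a\<in>A. \<Sum>b\<in>B. \<Sum>c\<in>C. \<Sum>d\<in>D. f a b c d) = (\<Sum>a\<in>A. \<Sum>c\<in>C. \<Sum>b\<in>B. \<Sum>d\<in>D. f a b c d)"
    by (rule sum_swap_middle)
  also have "\<dots> = (\<Sum>c\<in>C. \<Sum>a\<in>A. \<Sum>b\<in>B. \<Sum>d\<in>D. f a b c d)"
    by (rule sum.swap)
  also have "\<dots> = (\<Sum>c\<in>C. \<Sum>a\<in>A. \<Sum>d\<in>D. \<Sum>b\<in>B. f a b c d)"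
    by (rule sum.cong[OF refl], rule sum.cong[OF refl], rule sum.swap)
  also have "\<dots> = (\<Sum>c\<in>C. \<Sum>d\<in>D. \<Sum>a\<in>A. \<Sum>b\<in>B. f a b c d)"
    by (rule sum.cong[OF refl], rule sum.swap)
  finally show ?thesis .
qed

text \<open>Reading \<open>\<psi>\<close> as a \<open>dA \<times> dB\<close> matrix \<open>\<Psi>\<close>, \<open>sandwich dA \<psi> M\<close> is \<open>\<Psi>\<^sup>* M \<Psi>\<close>.\<close>

definition sandwich :: "nat \<Rightarrow> (nat \<Rightarrow> nat \<Rightarrow> complex) \<Rightarrow> (nat \<Rightarrow> nat \<Rightarrow> complex) \<Rightarrow> nat \<Rightarrow> nat \<Rightarrow> complex" where
  "sandwich dA \<psi> M j j' = (\<Sum>i<dA. \<Sum>i'<dA. cnj (\<psi> i j) * M i i' * \<psi> i' j')"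

lemma tensor_expect_sandwich:
  "tensor_expect dA dB \<psi> M N = (\<Sum>j<dB. \<Sum>j'<dB. sandwich dA \<psi> M j j' * N j j')"
proof -
  have "tensor_expect dA dB \<psi> M N
      = (\<Sum>i<dA. \<Sum>j<dB. \<Sum>i'<dA. \<Sum>j'<dB. cnj (\<psi> i j) * M i i' * \<psi> i' j' * N j j')"
    unfolding tensor_expect_def by (simp add: ac_simps)
  also have "\<dots> = (\<Sum>j<dB. \<Sum>j'<dB. \<Sum>i<dA. \<Sum>i'<dA. cnj (\<psi> i j) * M i i' * \<psi> i' j' * N j j')"
    by (rule trans[OF sum_swap_middle sum_swap_pairs])
  finally show ?thesis
    unfolding sandwich_def by (simp add: sum_distrib_right)
qed

lemma quad_form_sandwich:
  "quad_form {..<dB} (sandwich dA \<psi> M) v = quad_form {..<dA} M (\<lambda>i. \<Sum>j<dB. \<psi> i j * v j)"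
proof -
  have "quad_form {..<dB} (sandwich dA \<psi> M) v
      = (\<Sum>j<dB. \<Sum>j'<dB. \<Sum>i<dA. \<Sum>i'<dA. cnj (\<psi> i j * v j) * M i i' * (\<psi> i' j' * v j'))"
    unfolding quad_form_def sandwich_def
    by (simp add: sum_distrib_left sum_distrib_right ac_simps)
  also have "\<dots> = (\<Sum>i<dA. \<Sum>i'<dA. \<Sum>j<dB. \<Sum>j'<dB. cnj (\<psi> i j * v j) * M i i' * (\<psi> i' j' * v j'))"
    by (rule sum_swap_pairs)
  also have "\<dots> = quad_form {..<dA} M (\<lambda>i. \<Sum>j<dB. \<psi> i j * v j)"
    unfolding quad_form_def cnj_sum sum_distrib_right
    by (intro sum.cong refl) (simp add: sum_distrib_left)
  finally show ?thesis .
qed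

lemma tensor_expect_nonneg:
  assumes "psd dA M" "psd dB N"
  shows "0 \<le> Re (tensor_expect dA dB \<psi> M N)"
proof -
  have "nonneg_form_on {..<dB} (sandwich dA \<psi> M)"
    using assms(1) unfolding psd_iff_on_lessThan nonneg_form_on_def quad_form_sandwich by blast
  then show ?thesis
    using assms(2) unfolding psd_iff_on_lessThan tensor_expect_sandwich
    by (intro sum_hadamard_nonneg) auto
qed

definition id_mat :: "nat \<Rightarrow> nat \<Rightarrow> complex" where
  "id_mat i j = (if i = j then 1 else 0)"

lemma tensor_expect_cong:
  assumes "\<And>i i'. i < dA \<Longrightarrow> i' < dA \<Longrightarrow> M i i' = M' i i'"
    and "\<And>j j'. j < dB \<Longrightarrow> j' < dB \<Longrightarrow> N j j' = N' j j'"
  shows "tensor_expect dA dB \<psi> M N = tensor_expect dA dB \<psi> M' N'"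
  unfolding tensor_expect_def using assms by (intro sum.cong refl) auto

lemma povm_tensor_expect_sum_left:
  assumes "povm dA P"
  shows "(\<Sum>a\<in>UNIV. tensor_expect dA dB \<psi> (P a) N) = tensor_expect dA dB \<psi> id_mat N"
proof -
  have "(\<Sum>a\<in>UNIV. tensor_expect dA dB \<psi> (P a) N) = tensor_expect dA dB \<psi> (\<lambda>i i'. \<Sum>a\<in>UNIV. P a i i') N"
    unfolding tensor_expect_def by (simp add: sum_distrib_left sum_distrib_right sum.swap[of _ UNIV])
  also have "\<dots> = tensor_expect dA dB \<psi> id_mat N"
    using assms unfolding povm_def id_mat_def by (intro tensor_expect_cong) auto
  finally show ?thesis .
qed

lemma povm_tensor_expect_sum_right:
  assumes "povm dB P"
  shows "(\<Sum>b\<in>UNIV. tensor_expect dA dB \<psi> M (P b)) = tensor_expect dA dB \<psi> M id_mat"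
proof -
  have "(\<Sum>b\<in>UNIV. tensor_expect dA dB \<psi> M (P b)) = tensor_expect dA dB \<psi> M (\<lambda>j j'. \<Sum>b\<in>UNIV. P b j j')"
    unfolding tensor_expect_def by (simp add: sum_distrib_left sum_distrib_right sum.swap[of _ UNIV])
  also have "\<dots> = tensor_expect dA dB \<psi> M id_mat"
    using assms unfolding povm_def id_mat_def by (intro tensor_expect_cong) auto
  finally show ?thesis .
qed

lemma unit_state_tensor_expect_id:
  assumes "unit_state dA dB \<psi>"
  shows "tensor_expect dA dB \<psi> id_mat id_mat = 1"
proof -
  have "cnj (\<psi> i j) * id_mat i i' * id_mat j j' * \<psi> i' j'
      = (if j' = j then if i' = i then cnj (\<psi> i j) * \<psi> i j else 0 else 0)" for i j i' j'
    unfolding id_mat_def by auto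
  then have "tensor_expect dA dB \<psi> id_mat id_mat = (\<Sum>i<dA. \<Sum>j<dB. cnj (\<psi> i j) * \<psi> i j)"
    unfolding tensor_expect_def by simp
  also have "\<dots> = (\<Sum>i<dA. \<Sum>j<dB. of_real ((cmod (\<psi> i j))\<^sup>2))"
    by (intro sum.cong refl) (simp only: complex_norm_square mult.commute)
  finally show ?thesis
    using assms unfolding unit_state_def of_real_sum[symmetric] by simp
qed

definition nonsignalling :: "('x \<Rightarrow> 'y \<Rightarrow> 'a::finite \<Rightarrow> 'b::finite \<Rightarrow> real) \<Rightarrow> bool" where
  "nonsignalling p \<longleftrightarrow> (\<forall>x y a b. 0 \<le> p x y a b) \<and> (\<forall>x y. (\<Sum>a\<in>UNIV. \<Sum>b\<in>UNIV. p x y a b) = 1)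
     \<and> (\<forall>x y y' a. (\<Sum>b\<in>UNIV. p x y a b) = (\<Sum>b\<in>UNIV. p x y' a b))
     \<and> (\<forall>x x' y b. (\<Sum>a\<in>UNIV. p x y a b) = (\<Sum>a\<in>UNIV. p x' y a b))"

lemma nonsignalling_nonneg: "nonsignalling p \<Longrightarrow> 0 \<le> p x y a b"
  unfolding nonsignalling_def by blast

lemma nonsignalling_alice_marginal:
  "nonsignalling p \<Longrightarrow> (\<Sum>b\<in>UNIV. p x y a b) = (\<Sum>b\<in>UNIV. p x y' a b)"
  unfolding nonsignalling_def by blast

lemma nonsignalling_bob_marginal:
  "nonsignalling p \<Longrightarrow> (\<Sum>a\<in>UNIV. p x y a b) = (\<Sum>a\<in>UNIV. p x' y a b)"
  unfolding nonsignalling_def by blast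

lemma quantum_correlation_nonsignalling:
  fixes Am :: "'x \<Rightarrow> 'a::finite \<Rightarrow> nat \<Rightarrow> nat \<Rightarrow> complex" and Bm :: "'y \<Rightarrow> 'b::finite \<Rightarrow> nat \<Rightarrow> nat \<Rightarrow> complex"
  assumes "unit_state dA dB \<psi>" "\<forall>x. povm dA (Am x)" "\<forall>y. povm dB (Bm y)"
  shows "nonsignalling (\<lambda>x y a b. Re (tensor_expect dA dB \<psi> (Am x a) (Bm y b)))"
proof -
  have marg_A: "(\<Sum>b\<in>UNIV. Re (tensor_expect dA dB \<psi> (Am x a) (Bm y b))) = Re (tensor_expect dA dB \<psi> (Am x a) id_mat)"
    for x y a using povm_tensor_expect_sum_right[of dB "Bm y" dA \<psi> "Am x a"] assms(3)
    by (metis Re_sum)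
  have marg_B: "(\<Sum>a\<in>UNIV. Re (tensor_expect dA dB \<psi> (Am x a) (Bm y b))) = Re (tensor_expect dA dB \<psi> id_mat (Bm y b))"
    for x y b using povm_tensor_expect_sum_left[of dA "Am x" dB \<psi> "Bm y b"] assms(2)
    by (metis Re_sum)
  show ?thesis
    unfolding nonsignalling_def
  proof (intro conjI allI)
    show "0 \<le> Re (tensor_expect dA dB \<psi> (Am x a) (Bm y b))" for x y a b
      using assms(2,3) unfolding povm_def by (intro tensor_expect_nonneg) auto
    show "(\<Sum>a\<in>UNIV. \<Sum>b\<in>UNIV. Re (tensor_expect dA dB \<psi> (Am x a) (Bm y b))) = 1" for x y
    proof -
      have "(\<Sum>a\<in>UNIV. \<Sum>b\<in>UNIV. Re (tensor_expect dA dB \<psi> (Am x a) (Bm y b)))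
          = Re (\<Sum>a\<in>UNIV. tensor_expect dA dB \<psi> (Am x a) id_mat)"
        by (simp add: marg_A)
      also have "\<dots> = 1"
        using povm_tensor_expect_sum_left[of dA "Am x" dB \<psi> id_mat] assms
        by (simp add: unit_state_tensor_expect_id)
      finally show ?thesis .
    qed
  qed (simp_all only: marg_A marg_B)
qed

lemma sum_UNIV_prod: "(\<Sum>h\<in>UNIV. f h) = (\<Sum>a\<in>UNIV. \<Sum>b\<in>UNIV. f (a, b))"
  unfolding sum.cartesian_product UNIV_Times_UNIV by simp

definition normalize_dist :: "('c::finite \<Rightarrow> real) \<Rightarrow> 'c \<Rightarrow> real" where
  "normalize_dist r c = r c / (\<Sum>c'\<in>UNIV. r c')"

lemma normalize_dist_nonneg: "\<forall>c. 0 \<le> r c \<Longrightarrow> 0 \<le> normalize_dist r c"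
  unfolding normalize_dist_def by (simp add: sum_nonneg)

lemma sum_mult_normalize_dist:
  fixes q :: "'d::finite \<Rightarrow> real" and r :: "'c::finite \<Rightarrow> real"
  assumes "\<forall>c. 0 \<le> r c" "(\<Sum>d\<in>UNIV. q d) = (\<Sum>c\<in>UNIV. r c)"
  shows "(\<Sum>d\<in>UNIV. q d) * normalize_dist r c = r c"
proof (cases "(\<Sum>c\<in>UNIV. r c) = 0")
  case True
  then have "r c = 0" using assms(1) by (simp add: sum_nonneg_eq_0_iff)
  then show ?thesis unfolding normalize_dist_def by simp
next
  case False
  then show ?thesis unfolding normalize_dist_def assms(2) by simp
qed

lemma mult_sum_normalize_dist:
  fixes q :: "'d::finite \<Rightarrow> real" and r :: "'c::finite \<Rightarrow> real"
  assumes "\<forall>d. 0 \<le> q d" "(\<Sum>d\<in>UNIV. q d) = (\<Sum>c\<in>UNIV. r c)"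
  shows "q d * (\<Sum>c\<in>UNIV. normalize_dist r c) = q d"
proof (cases "(\<Sum>c\<in>UNIV. r c) = 0")
  case True
  then have "q d = 0" using assms by (simp add: sum_nonneg_eq_0_iff)
  then show ?thesis by simp
next
  case False
  then show ?thesis unfolding normalize_dist_def by (simp add: sum_divide_distrib[symmetric])
qed

text \<open>The answer \<open>a'\<close> to \<open>X\<close> is drawn from \<open>p X (\<not> Y)\<close> conditioned on Bob's answer \<open>b\<close>, and the
  answer \<open>b'\<close> to \<open>Y\<close> from \<open>p (\<not> X) Y\<close> conditioned on Alice's answer \<open>a\<close>.  When a conditioning event
  has probability zero, \<open>normalize_dist\<close> returns the zero function, which is harmless because the
  event is then weighted by zero.\<close>

definition glued_weight :: "(bool \<Rightarrow> bool \<Rightarrow> 'a::finite \<Rightarrow> 'b::finite \<Rightarrow> real) \<Rightarrow> bool \<Rightarrow> bool \<Rightarrow> 'a \<times> 'b \<times> 'a \<times> 'b \<Rightarrow> real" where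
  "glued_weight p X Y = (\<lambda>(a, b, a', b'). p (\<not> X) (\<not> Y) a b
     * normalize_dist (\<lambda>a'. p X (\<not> Y) a' b) a' * normalize_dist (\<lambda>b'. p (\<not> X) Y a b') b')"

lemma glued_weight_nonneg: "nonsignalling p \<Longrightarrow> 0 \<le> glued_weight p X Y h"
  unfolding glued_weight_def by (cases h) (simp add: nonsignalling_nonneg normalize_dist_nonneg)

lemma glued_weight_sum_fourth:
  assumes "nonsignalling p"
  shows "(\<Sum>b'\<in>UNIV. glued_weight p X Y (a, b, a', b'))
    = p (\<not> X) (\<not> Y) a b * normalize_dist (\<lambda>a'. p X (\<not> Y) a' b) a'"
proof -
  have "p (\<not> X) (\<not> Y) a b * (\<Sum>b'\<in>UNIV. normalize_dist (\<lambda>b'. p (\<not> X) Y a b') b') = p (\<not> X) (\<not> Y) a b"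
    using assms by (intro mult_sum_normalize_dist) (auto simp: nonsignalling_nonneg nonsignalling_alice_marginal)
  moreover have "(\<Sum>b'\<in>UNIV. glued_weight p X Y (a, b, a', b'))
      = normalize_dist (\<lambda>a'. p X (\<not> Y) a' b) a' * (p (\<not> X) (\<not> Y) a b * (\<Sum>b'\<in>UNIV. normalize_dist (\<lambda>b'. p (\<not> X) Y a b') b'))"
    unfolding glued_weight_def sum_distrib_left by (simp add: ac_simps)
  ultimately show ?thesis by simp
qed

lemma glued_weight_sum_third:
  assumes "nonsignalling p"
  shows "(\<Sum>a'\<in>UNIV. glued_weight p X Y (a, b, a', b'))
    = p (\<not> X) (\<not> Y) a b * normalize_dist (\<lambda>b'. p (\<not> X) Y a b') b'"
proof -
  have "p (\<not> X) (\<not> Y) a b * (\<Sum>a'\<in>UNIV. normalize_dist (\<lambda>a'. p X (\<not> Y) a' b) a') = p (\<not> X) (\<not> Y) a b"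
    using assms by (intro mult_sum_normalize_dist) (auto simp: nonsignalling_nonneg nonsignalling_bob_marginal)
  moreover have "(\<Sum>a'\<in>UNIV. glued_weight p X Y (a, b, a', b'))
      = normalize_dist (\<lambda>b'. p (\<not> X) Y a b') b' * (p (\<not> X) (\<not> Y) a b * (\<Sum>a'\<in>UNIV. normalize_dist (\<lambda>a'. p X (\<not> Y) a' b) a'))"
    unfolding glued_weight_def sum_distrib_left by (simp add: ac_simps)
  ultimately show ?thesis by simp
qed

lemma glued_weight_sum_pair:
  assumes "nonsignalling p"
  shows "(\<Sum>a'\<in>UNIV. \<Sum>b'\<in>UNIV. glued_weight p X Y (a, b, a', b')) = p (\<not> X) (\<not> Y) a b"
  unfolding glued_weight_sum_fourth[OF assms] sum_distrib_left[symmetric] using assms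
  by (intro mult_sum_normalize_dist) (auto simp: nonsignalling_nonneg nonsignalling_bob_marginal)

lemma glued_weight_reproduces_base:
  assumes "nonsignalling p"
  shows "(\<Sum>(a, b, a', b')\<in>UNIV. glued_weight p X Y (a, b, a', b') * f a b)
    = (\<Sum>a\<in>UNIV. \<Sum>b\<in>UNIV. f a b * p (\<not> X) (\<not> Y) a b)"
proof -
  have "(\<Sum>(a, b, a', b')\<in>UNIV. glued_weight p X Y (a, b, a', b') * f a b)
      = (\<Sum>a\<in>UNIV. \<Sum>b\<in>UNIV. (\<Sum>a'\<in>UNIV. \<Sum>b'\<in>UNIV. glued_weight p X Y (a, b, a', b')) * f a b)"
    by (simp add: sum_UNIV_prod sum_distrib_right)
  then show ?thesis by (simp add: glued_weight_sum_pair[OF assms] mult.commute)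
qed

lemma glued_weight_reproduces_X:
  assumes "nonsignalling p"
  shows "(\<Sum>(a, b, a', b')\<in>UNIV. glued_weight p X Y (a, b, a', b') * f a' b)
    = (\<Sum>a\<in>UNIV. \<Sum>b\<in>UNIV. f a b * p X (\<not> Y) a b)"
proof -
  let ?q = "\<lambda>a b. p (\<not> X) (\<not> Y) a b" and ?n = "\<lambda>b. normalize_dist (\<lambda>a'. p X (\<not> Y) a' b)"
  have "(\<Sum>(a, b, a', b')\<in>UNIV. glued_weight p X Y (a, b, a', b') * f a' b)
      = (\<Sum>a\<in>UNIV. \<Sum>b\<in>UNIV. \<Sum>a'\<in>UNIV. (\<Sum>b'\<in>UNIV. glued_weight p X Y (a, b, a', b')) * f a' b)"
    by (simp add: sum_UNIV_prod sum_distrib_right)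
  also have "\<dots> = (\<Sum>a\<in>UNIV. \<Sum>b\<in>UNIV. \<Sum>a'\<in>UNIV. ?q a b * ?n b a' * f a' b)"
    by (simp add: glued_weight_sum_fourth[OF assms])
  also have "\<dots> = (\<Sum>b\<in>UNIV. \<Sum>a'\<in>UNIV. \<Sum>a\<in>UNIV. ?q a b * ?n b a' * f a' b)"
    by (subst sum.swap) (rule sum.cong[OF refl], rule sum.swap)
  also have "\<dots> = (\<Sum>b\<in>UNIV. \<Sum>a'\<in>UNIV. (\<Sum>a\<in>UNIV. ?q a b) * ?n b a' * f a' b)"
    by (simp add: sum_distrib_right)
  also have "\<dots> = (\<Sum>b\<in>UNIV. \<Sum>a'\<in>UNIV. p X (\<not> Y) a' b * f a' b)"
    using assms by (subst sum_mult_normalize_dist) (auto simp: nonsignalling_nonneg nonsignalling_bob_marginal)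
  finally show ?thesis by (subst sum.swap) (simp add: mult.commute)
qed

lemma glued_weight_reproduces_Y:
  assumes "nonsignalling p"
  shows "(\<Sum>(a, b, a', b')\<in>UNIV. glued_weight p X Y (a, b, a', b') * f a b')
    = (\<Sum>a\<in>UNIV. \<Sum>b\<in>UNIV. f a b * p (\<not> X) Y a b)"
proof -
  let ?q = "\<lambda>a b. p (\<not> X) (\<not> Y) a b" and ?n = "\<lambda>a. normalize_dist (\<lambda>b'. p (\<not> X) Y a b')"
  have "(\<Sum>(a, b, a', b')\<in>UNIV. glued_weight p X Y (a, b, a', b') * f a b')
      = (\<Sum>a\<in>UNIV. \<Sum>b\<in>UNIV. \<Sum>a'\<in>UNIV. \<Sum>b'\<in>UNIV. glued_weight p X Y (a, b, a', b') * f a b')"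
    by (simp add: sum_UNIV_prod)
  also have "\<dots> = (\<Sum>a\<in>UNIV. \<Sum>b\<in>UNIV. \<Sum>b'\<in>UNIV. (\<Sum>a'\<in>UNIV. glued_weight p X Y (a, b, a', b')) * f a b')"
    by (rule sum.cong[OF refl], rule sum.cong[OF refl], subst sum.swap) (simp add: sum_distrib_right)
  also have "\<dots> = (\<Sum>a\<in>UNIV. \<Sum>b'\<in>UNIV. \<Sum>b\<in>UNIV. ?q a b * ?n a b' * f a b')"
    by (simp add: glued_weight_sum_third[OF assms]) (rule sum.cong[OF refl], rule sum.swap)
  also have "\<dots> = (\<Sum>a\<in>UNIV. \<Sum>b'\<in>UNIV. (\<Sum>b\<in>UNIV. ?q a b) * ?n a b' * f a b')"
    by (simp add: sum_distrib_right)
  also have "\<dots> = (\<Sum>a\<in>UNIV. \<Sum>b'\<in>UNIV. p (\<not> X) Y a b' * f a b')"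
    using assms by (subst sum_mult_normalize_dist) (auto simp: nonsignalling_nonneg nonsignalling_alice_marginal)
  finally show ?thesis by (simp add: mult.commute)
qed

lemma classical_payoff_le_classical_value:
  fixes \<pi> :: "bool \<Rightarrow> bool \<Rightarrow> real" and V :: "'a::finite \<Rightarrow> 'b::finite \<Rightarrow> bool \<Rightarrow> bool \<Rightarrow> bool"
  shows "(\<Sum>x\<in>UNIV. \<Sum>y\<in>UNIV. \<pi> x y * (if V (\<alpha> x) (\<beta> y) x y then 1 else 0)) \<le> classical_value \<pi> V"
proof -
  let ?C = "{(\<Sum>x\<in>UNIV. \<Sum>y\<in>UNIV. \<pi> x y * (if V (\<alpha> x) (\<beta> y) x y then 1 else 0))
      | (\<alpha> :: bool \<Rightarrow> 'a) (\<beta> :: bool \<Rightarrow> 'b). True}"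
  have "?C = (\<lambda>(\<alpha>, \<beta>). \<Sum>x\<in>UNIV. \<Sum>y\<in>UNIV. \<pi> x y * (if V (\<alpha> x) (\<beta> y) x y then 1 else 0)) ` UNIV"
    by auto
  then have "bdd_above ?C" by (simp add: bdd_above_finite)
  then show ?thesis unfolding classical_value_def by (rule cSup_upper[rotated]) auto
qed

lemma local_model_payoff_le_classical_value:
  fixes \<pi> :: "bool \<Rightarrow> bool \<Rightarrow> real" and V :: "'a::finite \<Rightarrow> 'b::finite \<Rightarrow> bool \<Rightarrow> bool \<Rightarrow> bool"
    and w :: "'h::finite \<Rightarrow> real" and \<alpha> :: "'h \<Rightarrow> bool \<Rightarrow> 'a" and \<beta> :: "'h \<Rightarrow> bool \<Rightarrow> 'b"
  assumes "\<And>h. 0 \<le> w h" "(\<Sum>h\<in>UNIV. w h) = 1"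
    and "\<And>x y f. \<pi> x y \<noteq> 0 \<Longrightarrow> (\<Sum>a\<in>UNIV. \<Sum>b\<in>UNIV. f a b * p x y a b) = (\<Sum>h\<in>UNIV. w h * f (\<alpha> h x) (\<beta> h y))"
  shows "game_payoff \<pi> V p \<le> classical_value \<pi> V"
proof -
  let ?ind = "\<lambda>a b x y. if V a b x y then 1 else (0::real)"
  have "game_payoff \<pi> V p = (\<Sum>x\<in>UNIV. \<Sum>y\<in>UNIV. \<pi> x y * (\<Sum>h\<in>UNIV. w h * ?ind (\<alpha> h x) (\<beta> h y) x y))"
    unfolding game_payoff_def
  proof (intro sum.cong refl)
    fix x y
    show "\<pi> x y * (\<Sum>a\<in>UNIV. \<Sum>b\<in>UNIV. ?ind a b x y * p x y a b)
        = \<pi> x y * (\<Sum>h\<in>UNIV. w h * ?ind (\<alpha> h x) (\<beta> h y) x y)"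
      using assms(3)[of x y "\<lambda>a b. ?ind a b x y"] by (cases "\<pi> x y = 0") simp_all
  qed
  also have "\<dots> = (\<Sum>x\<in>UNIV. \<Sum>h\<in>UNIV. \<Sum>y\<in>UNIV. w h * (\<pi> x y * ?ind (\<alpha> h x) (\<beta> h y) x y))"
    by (rule sum.cong[OF refl], subst sum.swap) (simp add: sum_distrib_left ac_simps)
  also have "\<dots> = (\<Sum>h\<in>UNIV. w h * (\<Sum>x\<in>UNIV. \<Sum>y\<in>UNIV. \<pi> x y * ?ind (\<alpha> h x) (\<beta> h y) x y))"
    by (subst sum.swap) (simp add: sum_distrib_left)
  also have "\<dots> \<le> (\<Sum>h\<in>UNIV. w h * classical_value \<pi> V)"
    using assms(1) by (intro sum_mono mult_left_mono classical_payoff_le_classical_value)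
  also have "\<dots> = classical_value \<pi> V"
    using assms(2) by (simp add: sum_distrib_right[symmetric])
  finally show ?thesis .
qed

lemma nonsignalling_payoff_le_classical_value:
  fixes p :: "bool \<Rightarrow> bool \<Rightarrow> 'a::finite \<Rightarrow> 'b::finite \<Rightarrow> real"
    and V :: "'a \<Rightarrow> 'b \<Rightarrow> bool \<Rightarrow> bool \<Rightarrow> bool"
  assumes "nonsignalling p" "\<pi> X Y = 0"
  shows "game_payoff \<pi> V p \<le> classical_value \<pi> V"
proof (rule local_model_payoff_le_classical_value)
  let ?\<alpha> = "\<lambda>(a :: 'a, b :: 'b, a' :: 'a, b' :: 'b) x. if x = X then a' else a"
  let ?\<beta> = "\<lambda>(a :: 'a, b :: 'b, a' :: 'a, b' :: 'b) y. if y = Y then b' else b"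
  have reproduces: "(\<Sum>a\<in>UNIV. \<Sum>b\<in>UNIV. f a b * p x y a b)
      = (\<Sum>h\<in>UNIV. glued_weight p X Y h * f (?\<alpha> h x) (?\<beta> h y))" if xy: "(x, y) \<noteq> (X, Y)" for x y f
  proof -
    consider "x = (\<not> X)" "y = (\<not> Y)" | "x = X" "y = (\<not> Y)" | "x = (\<not> X)" "y = Y"
      using xy by auto
    then show ?thesis
      by cases (simp_all add: sum_UNIV_prod glued_weight_reproduces_base[OF assms(1), symmetric]
          glued_weight_reproduces_X[OF assms(1), symmetric] glued_weight_reproduces_Y[OF assms(1), symmetric])
  qed
  show "0 \<le> glued_weight p X Y h" for h
    using assms(1) by (rule glued_weight_nonneg)
  show "(\<Sum>h\<in>UNIV. glued_weight p X Y h) = 1"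
    using reproduces[of "\<not> X" "\<not> Y" "\<lambda>_ _. 1"] assms(1) unfolding nonsignalling_def by simp
  show "(\<Sum>a\<in>UNIV. \<Sum>b\<in>UNIV. f a b * p x y a b) = (\<Sum>h\<in>UNIV. glued_weight p X Y h * f (?\<alpha> h x) (?\<beta> h y))"
    if "\<pi> x y \<noteq> 0" for x y f
    by (rule reproduces) (use that assms(2) in fastforce)
qed

lemma entangled_payoff_le_classical_value:
  fixes Am :: "bool \<Rightarrow> 'a::finite \<Rightarrow> nat \<Rightarrow> nat \<Rightarrow> complex" and Bm :: "bool \<Rightarrow> 'b::finite \<Rightarrow> nat \<Rightarrow> nat \<Rightarrow> complex"
  assumes "\<pi> X Y = 0" "unit_state dA dB \<psi>" "\<forall>x. povm dA (Am x)" "\<forall>y. povm dB (Bm y)"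
  shows "game_payoff \<pi> V (\<lambda>x y a b. Re (tensor_expect dA dB \<psi> (Am x a) (Bm y b))) \<le> classical_value \<pi> V"
  using quantum_correlation_nonsignalling[OF assms(2-4)] assms(1)
  by (rule nonsignalling_payoff_le_classical_value)

lemma deterministic_povm: "povm 1 (\<lambda>a (i::nat) (j::nat). if a = a0 then 1 else 0)"
  unfolding povm_def psd_def hermitian_def by (auto simp: mult.assoc[symmetric])

lemma classical_payoff_entangled_attainable:
  fixes \<alpha> :: "bool \<Rightarrow> 'a::finite" and \<beta> :: "bool \<Rightarrow> 'b::finite"
  shows "\<exists>dA dB \<psi> (Am :: bool \<Rightarrow> 'a \<Rightarrow> nat \<Rightarrow> nat \<Rightarrow> complex) (Bm :: bool \<Rightarrow> 'b \<Rightarrow> nat \<Rightarrow> nat \<Rightarrow> complex).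
     unit_state dA dB \<psi> \<and> (\<forall>x. povm dA (Am x)) \<and> (\<forall>y. povm dB (Bm y))
     \<and> game_payoff \<pi> V (\<lambda>x y a b. Re (tensor_expect dA dB \<psi> (Am x a) (Bm y b)))
       = (\<Sum>x\<in>UNIV. \<Sum>y\<in>UNIV. \<pi> x y * (if V (\<alpha> x) (\<beta> y) x y then 1 else 0))"
proof (intro exI conjI allI)
  let ?Am = "\<lambda>x a (i::nat) (j::nat). if a = \<alpha> x then 1 else (0::complex)"
  let ?Bm = "\<lambda>y b (i::nat) (j::nat). if b = \<beta> y then 1 else (0::complex)"
  show "unit_state 1 1 (\<lambda>_ _. 1)" unfolding unit_state_def by simp
  show "povm 1 (?Am x)" "povm 1 (?Bm y)" for x y by (rule deterministic_povm)+
  have "(if V a b x y then 1 else 0) * Re (tensor_expect 1 1 (\<lambda>_ _. 1) (?Am x a) (?Bm y b))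
      = (if b = \<beta> y then if a = \<alpha> x then if V (\<alpha> x) (\<beta> y) x y then 1 else 0 else 0 else 0)" for x y a b
    unfolding tensor_expect_def by simp
  then show "game_payoff \<pi> V (\<lambda>x y a b. Re (tensor_expect 1 1 (\<lambda>_ _. 1) (?Am x a) (?Bm y b)))
      = (\<Sum>x\<in>UNIV. \<Sum>y\<in>UNIV. \<pi> x y * (if V (\<alpha> x) (\<beta> y) x y then 1 else 0))"
    unfolding game_payoff_def by simp
qed

theorem mainTheorem8:
  fixes \<pi> :: "bool \<Rightarrow> bool \<Rightarrow> real"
    and V :: "'a::finite \<Rightarrow> 'b::finite \<Rightarrow> bool \<Rightarrow> bool \<Rightarrow> bool"
  assumes "prob_dist \<pi>"
    and "\<exists>X Y. \<pi> X Y = 0"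
  shows "entangled_value \<pi> V = classical_value \<pi> V"
proof -
  obtain X Y where "\<pi> X Y = 0" using assms(2) by blast
  define E where "E = {game_payoff \<pi> V (\<lambda>x y a b. Re (tensor_expect dA dB \<psi> (Am x a) (Bm y b)))
      | dA dB \<psi> (Am :: bool \<Rightarrow> 'a \<Rightarrow> nat \<Rightarrow> nat \<Rightarrow> complex) (Bm :: bool \<Rightarrow> 'b \<Rightarrow> nat \<Rightarrow> nat \<Rightarrow> complex).
         unit_state dA dB \<psi> \<and> (\<forall>x. povm dA (Am x)) \<and> (\<forall>y. povm dB (Bm y))}"
  define C where "C = {(\<Sum>x\<in>UNIV. \<Sum>y\<in>UNIV. \<pi> x y * (if V (\<alpha> x) (\<beta> y) x y then 1 else 0))
      | (\<alpha> :: bool \<Rightarrow> 'a) (\<beta> :: bool \<Rightarrow> 'b). True}"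
  have upper: "e \<le> classical_value \<pi> V" if "e \<in> E" for e
    using that entangled_payoff_le_classical_value[where \<pi> = \<pi> and X = X and Y = Y] \<open>\<pi> X Y = 0\<close>
    unfolding E_def by blast
  have "C \<subseteq> E"
    unfolding C_def E_def using classical_payoff_entangled_attainable[where \<pi> = \<pi> and V = V]
    by (smt (verit) mem_Collect_eq subsetI)
  moreover have "C \<noteq> {}" unfolding C_def by blast
  moreover have "bdd_above E"
    using upper by (rule bdd_aboveI)
  ultimately have "Sup C \<le> Sup E"
    by (rule cSup_subset_mono[rotated 2])
  moreover have "Sup E \<le> classical_value \<pi> V"
    using \<open>C \<subseteq> E\<close> \<open>C \<noteq> {}\<close> upper by (intro cSup_least) auto
  ultimately show ?thesis
    unfolding entangled_value_def classical_value_def E_def[symmetric] C_def[symmetric] by simp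
qed

end
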